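(* Let $r\ge3$ be odd. For any $n\ge r$ and $A>0$, there exists $f\in C^r[-1,1]$ with $f\le0$ on $[-1,0]$ and $f\ge0$ on $[0,1]$, such that every algebraic polynomial $P_n$ of degree $\le n$ with $P_n\le0$ on $(-1/n,0)$ and $P_n^{(i)}(0)=f^{(i)}(0)$ for $0\le i\le r$ obeys $$\|f-P_n\|>A\,\|f^{(r)}\|.$$
   Context: $\|\cdot\|$ is the sup norm on $[-1,1]$. *)

theory Defs
  imports "HOL-Analysis.Analysis" "HOL-Computational_Algebra.Polynomial"
begin

definition Cr_on_interval :: "nat \<Rightarrow> (real \<Rightarrow> real) \<Rightarrow> (nat \<Rightarrow> real \<Rightarrow> real) \<Rightarrow> bool" where
  "Cr_on_interval r f D \<longleftrightarrow>
     D 0 = f \<and>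
     (\<forall>i<r. \<forall>x\<in>{-1..1}. (D i has_real_derivative D (Suc i) x) (at x within {-1..1})) \<and>
     continuous_on {-1..1} (D r)"

definition supnorm :: "(real \<Rightarrow> real) \<Rightarrow> real" where
  "supnorm g = (SUP x\<in>{-1..1}. \<bar>g x\<bar>)"

end

(* The witness is f x = g (x / s) for the fixed profile g t = t (\<Lambda> (t + 1)^2 + \<rho> / 2) + \<sigma> sin (\<pi> t).
   Its cubic part dominates the sine term, so g has the sign of t; but the degree-r Maclaurin
   polynomial T of g has T (-1) = \<rho> / 2 > 0, because for odd r the degree-r Maclaurin polynomial
   of sin does not vanish at \<pi>. Rescaling makes both the r-th derivative of f and the Taylor
   remainder f - T (x / s) of size O(s^-r) on [-1, 1]. If P has the r-jet of f at 0 and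
   approximates f to within A times its r-th derivative, then R = P - T (x / s) is divisible by
   x^(r+1), has degree at most n and is O(s^-r) on [-1, 1]. Extrapolating R / x^(r+1) to -s from
   n + 1 equispaced nodes in [1 / (2 (n + 1)), 1] by a vanishing finite difference gives
   |R (-s)| = O(s), which for small s contradicts P (-s) \<le> 0 < \<rho> / 2 = T (-1). *)

theory Submission
  imports Defs
begin

section \<open>Finite differences and extrapolation of polynomials\<close>

lemma alternating_binomial_sum_Suc:
  fixes g :: "nat \<Rightarrow> 'a::comm_ring_1"
  shows "(\<Sum>j\<le>Suc m. (-1)^j * of_nat (Suc m choose j) * g j)
       = (\<Sum>j\<le>m. (-1)^j * of_nat (m choose j) * (g j - g (Suc j)))"
proof -
  have low: "(\<Sum>j\<le>m. (-1)^j * of_nat (m choose j) * g j)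
      = g 0 + (\<Sum>j\<le>m. (-1)^Suc j * of_nat (m choose Suc j) * g (Suc j))"
  proof -
    have "(\<Sum>j\<le>m. (-1)^j * of_nat (m choose j) * g j)
        = (\<Sum>j\<le>Suc m. (-1)^j * of_nat (m choose j) * g j)"
      by (simp add: binomial_eq_0)
    also have "\<dots> = g 0 + (\<Sum>j\<le>m. (-1)^Suc j * of_nat (m choose Suc j) * g (Suc j))"
      by (subst sum.atMost_Suc_shift) simp
    finally show ?thesis .
  qed
  have "(\<Sum>j\<le>Suc m. (-1)^j * of_nat (Suc m choose j) * g j)
      = g 0 + (\<Sum>j\<le>m. (-1)^Suc j * of_nat (Suc m choose Suc j) * g (Suc j))"
    by (subst sum.atMost_Suc_shift) simp
  also have "\<dots> = g 0 + (\<Sum>j\<le>m. (-1)^Suc j * of_nat (m choose Suc j) * g (Suc j))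
      - (\<Sum>j\<le>m. (-1)^j * of_nat (m choose j) * g (Suc j))"
  proof -
    have "(-1)^Suc j * of_nat (Suc m choose Suc j) * g (Suc j)
        = (-1)^Suc j * of_nat (m choose Suc j) * g (Suc j) - (-1)^j * of_nat (m choose j) * g (Suc j)"
      for j
      by (simp add: algebra_simps)
    then show ?thesis
      by (simp add: sum_subtractf)
  qed
  finally show ?thesis
    using low by (simp add: sum_subtractf algebra_simps)
qed

lemma degree_pcompose_shift_minus_le:
  fixes Q :: "'a::idom poly"
  assumes "degree Q \<le> Suc m"
  shows "degree (pcompose Q [:h, 1:] - Q) \<le> m"
proof (rule degree_le, intro allI impI)
  fix i
  assume "m < i"
  have "degree (pcompose Q [:h, 1:]) = degree Q"
    by (simp add: degree_pcompose)
  moreover have "coeff (pcompose Q [:h, 1:]) (degree Q) = coeff Q (degree Q)"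
    using lead_coeff_comp[of "[:h, 1:]" Q] by (simp add: degree_pcompose)
  ultimately show "coeff (pcompose Q [:h, 1:] - Q) i = 0"
    using assms \<open>m < i\<close> by (cases "i = degree Q") (simp_all add: coeff_eq_0)
qed

lemma alternating_binomial_sum_poly_eq_0:
  fixes Q :: "'a::idom poly"
  assumes "degree Q \<le> m"
  shows "(\<Sum>j\<le>Suc m. (-1)^j * of_nat (Suc m choose j) * poly Q (y + of_nat j * h)) = 0"
  using assms
proof (induction m arbitrary: Q)
  case 0
  then obtain c where "Q = [:c:]"
    by (metis degree_0_id le_zero_eq)
  then show ?case
    by simp
next
  case (Suc m)
  define \<Delta>Q where "\<Delta>Q = pcompose Q [:h, 1:] - Q"
  have "degree \<Delta>Q \<le> m"
    unfolding \<Delta>Q_def using Suc.prems by (rule degree_pcompose_shift_minus_le)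
  have difference:
    "poly Q (y + of_nat j * h) - poly Q (y + of_nat (Suc j) * h) = - poly \<Delta>Q (y + of_nat j * h)"
    for j
    by (simp add: \<Delta>Q_def poly_pcompose algebra_simps)
  have "(\<Sum>j\<le>Suc (Suc m). (-1)^j * of_nat (Suc (Suc m) choose j) * poly Q (y + of_nat j * h))
      = (\<Sum>j\<le>Suc m. (-1)^j * of_nat (Suc m choose j)
           * (poly Q (y + of_nat j * h) - poly Q (y + of_nat (Suc j) * h)))"
    by (rule alternating_binomial_sum_Suc)
  also have "\<dots> = - (\<Sum>j\<le>Suc m. (-1)^j * of_nat (Suc m choose j) * poly \<Delta>Q (y + of_nat j * h))"
    by (simp only: difference sum_negf mult_minus_right)
  also have "\<dots> = 0"
    using Suc.IH[OF \<open>degree \<Delta>Q \<le> m\<close>] by simp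
  finally show ?case .
qed

lemma abs_poly_le_of_equispaced_values:
  fixes Q :: "real poly"
  assumes "degree Q \<le> n" and bound: "\<And>j. j \<le> n \<Longrightarrow> \<bar>poly Q (y + real (Suc j) * h)\<bar> \<le> B"
  shows "\<bar>poly Q y\<bar> \<le> 2^Suc n * B"
proof -
  define c where "c j = real (Suc n choose Suc j)" for j
  have "B \<ge> 0"
    using bound[of 0] by linarith
  have "poly Q y + (\<Sum>j\<le>n. (-1)^Suc j * c j * poly Q (y + real (Suc j) * h)) = 0"
    using alternating_binomial_sum_poly_eq_0[OF assms(1), of y h]
    by (subst (asm) sum.atMost_Suc_shift) (simp add: c_def del: sum.atMost_Suc binomial_Suc_Suc)
  then have "\<bar>poly Q y\<bar> = \<bar>\<Sum>j\<le>n. (-1)^Suc j * c j * poly Q (y + real (Suc j) * h)\<bar>"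
    by (simp add: eq_neg_iff_add_eq_0)
  also have "\<dots> \<le> (\<Sum>j\<le>n. c j * B)"
    by (rule order.trans[OF sum_abs sum_mono])
      (simp add: abs_mult c_def bound mult_left_mono del: binomial_Suc_Suc of_nat_Suc)
  also have "\<dots> \<le> (1 + (\<Sum>j\<le>n. c j)) * B"
    using \<open>B \<ge> 0\<close> by (simp add: distrib_right sum_distrib_right)
  also have "1 + (\<Sum>j\<le>n. c j) = (\<Sum>j\<le>Suc n. real (Suc n choose j))"
    by (subst sum.atMost_Suc_shift) (simp add: c_def del: sum.atMost_Suc binomial_Suc_Suc)
  also have "\<dots> = 2^Suc n"
    by (metis choose_row_sum of_nat_numeral of_nat_power of_nat_sum)
  finally show ?thesis .
qed

lemma abs_poly_le_if_flat_at_0: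
  fixes R :: "real poly"
  assumes "degree R \<le> n"
    and flat: "\<And>i. i \<le> r \<Longrightarrow> coeff R i = 0"
    and bound: "\<And>x. x \<in> {-1..1} \<Longrightarrow> \<bar>poly R x\<bar> \<le> L"
    and "0 \<le> s" "s \<le> 1 / (2 * (real n + 1))"
  shows "\<bar>poly R (-s)\<bar> \<le> 2^Suc n * (2 * (real n + 1))^Suc r * L * s^Suc r"
proof -
  obtain Q where R: "R = monom 1 (Suc r) * Q"
    using flat monom_1_dvd_iff'[of "Suc r" R] by (auto elim: dvdE)
  have poly_R: "poly R x = x^Suc r * poly Q x" for x
    by (simp add: R poly_monom)
  have "degree Q \<le> n"
    using assms(1) degree_mult_right_le[of "monom 1 (Suc r)" Q] by (cases "Q = 0") (auto simp: R mult.commute)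
  define h where "h = 1 / (real n + 1)"
  define M where "M = 2 * (real n + 1)"
  have node_bound: "\<bar>poly Q (-s + real (Suc j) * h)\<bar> \<le> M^Suc r * L" if "j \<le> n" for j
  proof -
    define z where "z = -s + real (Suc j) * h"
    have "h \<le> real (Suc j) * h" and "real (Suc j) * h \<le> 1"
      using that by (simp_all add: h_def field_simps)
    moreover have "s \<le> h / 2" and "M * (h / 2) = 1"
      using assms(5) by (simp_all add: h_def M_def mult.commute)
    ultimately have "h / 2 \<le> z" and "z \<le> 1"
      using assms(4) by (simp_all add: z_def)
    moreover have "0 < h"
      by (simp add: h_def)
    ultimately have "0 \<le> z"
      by linarith
    have "0 \<le> M"
      by (simp add: M_def)
    then have "1 \<le> M * z"
      using mult_left_mono[OF \<open>h / 2 \<le> z\<close> \<open>0 \<le> M\<close>] \<open>M * (h / 2) = 1\<close> by linarith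
    then have "\<bar>poly Q z\<bar> \<le> (M * z)^Suc r * \<bar>poly Q z\<bar>"
      using mult_right_mono[OF one_le_power[of "M * z" "Suc r"], of "\<bar>poly Q z\<bar>"] by simp
    also have "\<dots> = M^Suc r * \<bar>poly R z\<bar>"
      using \<open>0 \<le> z\<close> by (simp add: poly_R abs_mult power_mult_distrib)
    also have "\<dots> \<le> M^Suc r * L"
      using \<open>0 \<le> z\<close> \<open>z \<le> 1\<close> bound[of z] by (intro mult_left_mono) (auto simp: M_def)
    finally show ?thesis
      by (simp add: z_def)
  qed
  have "\<bar>poly Q (-s)\<bar> \<le> 2^Suc n * (M^Suc r * L)"
    using abs_poly_le_of_equispaced_values[OF \<open>degree Q \<le> n\<close> node_bound] by simp
  then have "\<bar>poly R (-s)\<bar> \<le> s^Suc r * (2^Suc n * (M^Suc r * L))"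
    using assms(4) by (simp add: poly_R abs_mult power_abs mult_left_mono)
  then show ?thesis
    by (simp add: M_def mult_ac)
qed

section \<open>Estimates for the sine function\<close>

lemma abs_sin_pi_le_near_neg_1:
  fixes t \<Lambda> \<rho> :: real
  assumes "0 < \<rho>" and "0 \<le> \<Lambda>" and "2 * pi^2 \<le> \<Lambda> * \<rho>" and "\<bar>t + 1\<bar> \<le> 1/2"
  shows "\<bar>sin (pi * t)\<bar> \<le> \<bar>t\<bar> * (\<Lambda> * (t + 1)^2 + \<rho> / 2)"
proof -
  define u where "u = \<bar>t + 1\<bar>"
  have "\<bar>sin (pi * t)\<bar> = \<bar>sin (pi * (t + 1))\<bar>"
    by (simp add: distrib_left)
  also have "\<dots> \<le> pi * u"
    using abs_sin_x_le_abs_x[of "pi * (t + 1)"] by (simp add: u_def abs_mult)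
  also have "\<dots> \<le> pi^2 * u^2 / \<rho> + \<rho> / 4" \<comment> \<open>AM-GM\<close>
  proof -
    have "0 \<le> (pi * u - \<rho> / 2)^2 / \<rho>"
      using assms(1) by simp
    then show ?thesis
      using assms(1) by (simp add: power2_eq_square field_simps)
  qed
  also have "\<dots> \<le> \<Lambda> * u^2 / 2 + \<rho> / 4"
  proof -
    have "2 * pi^2 * u^2 \<le> \<Lambda> * \<rho> * u^2"
      using assms(3) by (rule mult_right_mono) simp
    then show ?thesis
      using assms(1) by (simp add: field_simps)
  qed
  also have "\<dots> = 1/2 * (\<Lambda> * (t + 1)^2 + \<rho> / 2)"
    by (simp add: u_def)
  also have "\<dots> \<le> \<bar>t\<bar> * (\<Lambda> * (t + 1)^2 + \<rho> / 2)"
    using assms by (intro mult_right_mono) (auto simp: abs_if split: if_splits)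
  finally show ?thesis .
qed

lemma abs_sin_pi_le_cubic:
  fixes t \<Lambda> \<rho> :: real
  assumes "0 < \<rho>" and "4 * pi \<le> \<Lambda>" and "2 * pi^2 \<le> \<Lambda> * \<rho>"
  shows "\<bar>sin (pi * t)\<bar> \<le> \<bar>t\<bar> * (\<Lambda> * (t + 1)^2 + \<rho> / 2)"
proof -
  have "0 \<le> \<Lambda>"
    using assms(2) pi_gt_zero by linarith
  consider "\<bar>t + 1\<bar> \<le> 1/2" | "1/2 \<le> \<bar>t + 1\<bar>"
    by linarith
  then show ?thesis
  proof cases
    case 1
    show ?thesis
      using assms(1) \<open>0 \<le> \<Lambda>\<close> assms(3) 1 by (rule abs_sin_pi_le_near_neg_1)
  next
    case 2
    then have "(1/2)^2 \<le> \<bar>t + 1\<bar>^2"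
      by (intro power_mono) auto
    then have "\<Lambda> * (1/4) \<le> \<Lambda> * (t + 1)^2"
      using \<open>0 \<le> \<Lambda>\<close> by (intro mult_left_mono) (simp_all add: power2_eq_square)
    then have "pi \<le> \<Lambda> * (t + 1)^2 + \<rho> / 2"
      using assms(1,2) by simp
    show ?thesis
    proof (cases "\<bar>t\<bar> \<le> 1/2")
      case True
      have "\<bar>sin (pi * t)\<bar> \<le> pi * \<bar>t\<bar>"
        using abs_sin_x_le_abs_x[of "pi * t"] by (simp add: abs_mult)
      also have "\<dots> \<le> (\<Lambda> * (t + 1)^2 + \<rho> / 2) * \<bar>t\<bar>"
        using \<open>pi \<le> \<Lambda> * (t + 1)^2 + \<rho> / 2\<close> by (rule mult_right_mono) simp
      finally show ?thesis
        by (simp only: mult.commute)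
    next
      case False
      have "1 \<le> 1/2 * pi"
        using pi_ge_two by linarith
      also have "\<dots> \<le> \<bar>t\<bar> * (\<Lambda> * (t + 1)^2 + \<rho> / 2)"
        using False \<open>pi \<le> \<Lambda> * (t + 1)^2 + \<rho> / 2\<close> by (intro mult_mono) auto
      finally show ?thesis
        using abs_sin_le_one order.trans by blast
    qed
  qed
qed

lemma fact_mult_sin_coeff: "fact i * sin_coeff i = sin (real i * pi / 2)"
proof (cases "even i")
  case True
  then obtain k where "i = 2 * k"
    by blast
  then show ?thesis
    by (simp add: sin_coeff_def)
next
  case False
  then obtain k where i: "i = 2 * k + 1"
    by (blast elim: oddE)
  have "real i * pi / 2 = real k * pi + pi / 2"
    by (simp add: i field_simps)
  then have "sin (real i * pi / 2) = (-1)^k"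
    by (simp only: sin_add sin_npi cos_npi sin_pi_half cos_pi_half)
  then show ?thesis
    by (simp add: sin_coeff_def i)
qed

lemma abs_sin_minus_maclaurin_le:
  "\<bar>sin y - (\<Sum>m<Suc r. sin_coeff m * y^m)\<bar> \<le> 2 * \<bar>y\<bar>^r / fact r"
proof -
  have "\<bar>sin_coeff r * y^r\<bar> \<le> \<bar>y\<bar>^r / fact r"
    by (simp add: sin_coeff_def abs_mult power_abs)
  then show ?thesis
    using Maclaurin_sin_bound[of y r] by (simp add: divide_inverse mult.commute)
qed

text \<open>The next nonzero Maclaurin term \<open>\<pi>^(r+2) / (r+2)!\<close> would otherwise be dominated by the
  remainder \<open>\<pi>^(r+4) / (r+4)!\<close>, which fails since \<open>\<pi>\<^sup>2 < (r + 3) (r + 4)\<close>.\<close>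

lemma sin_maclaurin_at_pi_neq_0:
  assumes "odd r"
  shows "(\<Sum>m<Suc r. sin_coeff m * pi^m) \<noteq> 0"
proof
  assume vanishes: "(\<Sum>m<Suc r. sin_coeff m * pi^m) = 0"
  have "sin_coeff (Suc r) = 0" "sin_coeff (r + 3) = 0" "\<bar>sin_coeff (r + 2)\<bar> = 1 / fact (r + 2)"
    using assms by (simp_all add: sin_coeff_def)
  moreover have "(\<Sum>m<r + 4. sin_coeff m * pi^m) = (\<Sum>m<Suc r. sin_coeff m * pi^m)
      + sin_coeff (Suc r) * pi^Suc r + sin_coeff (r + 2) * pi^(r + 2) + sin_coeff (r + 3) * pi^(r + 3)"
    by (simp add: numeral_eq_Suc)
  moreover define P where "P = pi^(r + 2) / fact (r + 2)"
  ultimately have "P \<le> pi^(r + 4) / fact (r + 4)"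
    using vanishes Maclaurin_sin_bound[of pi "r + 4"] by (simp add: abs_mult divide_inverse mult.commute)
  also have "\<dots> = pi^2 * P / ((real r + 4) * (real r + 3))"
    by (simp add: P_def numeral_eq_Suc field_simps)
  finally have "P * ((real r + 4) * (real r + 3)) \<le> pi^2 * P"
    by (subst (asm) pos_le_divide_eq) simp_all
  moreover have "0 < P"
    by (simp add: P_def)
  ultimately have "(real r + 4) * (real r + 3) \<le> pi^2"
    by (simp add: mult.commute)
  moreover have "pi^2 < 4 * 4"
    using mult_strict_mono[of pi 4 pi 4] pi_less_4 by (simp add: power2_eq_square)
  moreover have "5 * 4 \<le> (real r + 4) * (real r + 3)"
  proof -
    have "1 \<le> r"
      using assms by (cases r) auto
    then show ?thesis
      by (intro mult_mono) auto
  qed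
  ultimately show False
    by linarith
qed

section \<open>The witness\<close>

lemma poly_higher_pderiv_at_0: "poly ((pderiv ^^ i) p) 0 = fact i * coeff p i"
  by (simp add: poly_0_coeff_0 coeff_higher_pderiv pochhammer_fact)

lemma Cr_on_intervalI:
  assumes "\<And>i x. (D i has_real_derivative D (Suc i) x) (at x)"
  shows "Cr_on_interval r (D 0) D"
  unfolding Cr_on_interval_def using assms
  by (auto intro: has_field_derivative_at_within continuous_at_imp_continuous_on DERIV_isCont)

lemma has_real_derivative_rescaled:
  assumes "(g has_real_derivative g') (at (x / s))" and "s \<noteq> 0"
  shows "((\<lambda>x. g (x / s) / s^i) has_real_derivative g' / s^Suc i) (at x)"
proof -
  have "((\<lambda>x. x / s) has_real_derivative 1 / s) (at x)"
    using assms(2) by (auto intro!: derivative_eq_intros)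
  from DERIV_cdivide[OF DERIV_chain2[OF assms(1) this], of "s^i"] show ?thesis
    using assms(2) by (simp add: field_simps)
qed

lemma abs_le_supnorm:
  assumes "continuous_on {-1..1} g" and "x \<in> {-1..1}"
  shows "\<bar>g x\<bar> \<le> supnorm g"
  unfolding supnorm_def
proof (rule cSUP_upper[OF assms(2)])
  have "compact ((\<lambda>x. \<bar>g x\<bar>) ` {-1..1})"
    using assms(1) by (intro compact_continuous_image continuous_intros) auto
  then show "bdd_above ((\<lambda>x. \<bar>g x\<bar>) ` {-1..1})"
    by (intro bounded_imp_bdd_above compact_imp_bounded)
qed

lemma supnorm_le:
  assumes "\<And>x. x \<in> {-1..1} \<Longrightarrow> \<bar>g x\<bar> \<le> c"
  shows "supnorm g \<le> c"
  unfolding supnorm_def using assms by (intro cSUP_least) auto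

text \<open>\<open>G 0\<close> is the profile of the header, \<open>G i\<close> its \<open>i\<close>-th derivative and \<open>F s i\<close> the \<open>i\<close>-th
  derivative of the witness \<open>\<lambda>x. G 0 (x / s)\<close>. The sign \<open>\<sigma>\<close> is chosen opposite to the Maclaurin
  value at \<open>\<pi>\<close>, which makes \<open>taylor\<close> positive at \<open>-1\<close>.\<close>

locale sign_jet_witness =
  fixes r :: nat
  assumes odd_r: "odd r" and three_le_r: "3 \<le> r"
begin

definition \<rho> :: real where
  "\<rho> = \<bar>\<Sum>m<Suc r. sin_coeff m * pi^m\<bar>"

definition \<sigma> :: real where
  "\<sigma> = - sgn (\<Sum>m<Suc r. sin_coeff m * pi^m)"

definition \<Lambda> :: real where
  "\<Lambda> = 4 * pi + 2 * pi^2 / \<rho>"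

definition cubic :: "real poly" where
  "cubic = [:0, \<Lambda> + \<rho> / 2, 2 * \<Lambda>, \<Lambda>:]"

definition G :: "nat \<Rightarrow> real \<Rightarrow> real" where
  "G i t = poly ((pderiv ^^ i) cubic) t + \<sigma> * pi^i * sin (pi * t + real i * pi / 2)"

definition taylor :: "real poly" where
  "taylor = cubic + smult \<sigma> (\<Sum>i\<le>r. monom (pi^i * sin_coeff i) i)"

definition F :: "real \<Rightarrow> nat \<Rightarrow> real \<Rightarrow> real" where
  "F s i x = G i (x / s) / s^i"

lemma \<rho>_pos: "0 < \<rho>"
  using sin_maclaurin_at_pi_neq_0[OF odd_r] by (simp add: \<rho>_def)

lemma abs_\<sigma>: "\<bar>\<sigma>\<bar> = 1"
  using sin_maclaurin_at_pi_neq_0[OF odd_r] by (simp add: \<sigma>_def abs_sgn)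

lemma \<sigma>_mult_maclaurin: "\<sigma> * (\<Sum>m<Suc r. sin_coeff m * pi^m) = - \<rho>"
proof -
  have "- sgn a * a = - \<bar>a\<bar>" for a :: real
    by (simp add: sgn_if)
  then show ?thesis
    by (simp only: \<sigma>_def \<rho>_def)
qed

lemma \<Lambda>_bounds: "4 * pi \<le> \<Lambda>" "2 * pi^2 \<le> \<Lambda> * \<rho>"
  using \<rho>_pos by (simp_all add: \<Lambda>_def distrib_right)

lemma \<Lambda>_nonneg: "0 \<le> \<Lambda>"
  using \<Lambda>_bounds(1) pi_gt_zero by linarith

lemma poly_cubic: "poly cubic t = t * (\<Lambda> * (t + 1)^2 + \<rho> / 2)"
  by (simp add: cubic_def power2_eq_square algebra_simps)

lemma G_0: "G 0 t = t * (\<Lambda> * (t + 1)^2 + \<rho> / 2) + \<sigma> * sin (pi * t)"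
  by (simp add: G_def poly_cubic)

lemma has_real_derivative_G: "(G i has_real_derivative G (Suc i) t) (at t)"
proof -
  have "((\<lambda>t. sin (pi * t + real i * pi / 2)) has_real_derivative
      pi * sin (pi * t + real (Suc i) * pi / 2)) (at t)"
    unfolding sin_expansion_lemma by (auto intro!: derivative_eq_intros)
  from DERIV_add[OF poly_DERIV DERIV_cmult[OF this, of "\<sigma> * pi^i"]] show ?thesis
    unfolding G_def by (simp add: mult_ac)
qed

lemma G_0_nonpos: "t \<le> 0 \<Longrightarrow> G 0 t \<le> 0"
  and G_0_nonneg: "0 \<le> t \<Longrightarrow> 0 \<le> G 0 t"
proof -
  have "\<bar>\<sigma> * sin (pi * t)\<bar> \<le> \<bar>t\<bar> * (\<Lambda> * (t + 1)^2 + \<rho> / 2)"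
    using abs_sin_pi_le_cubic[OF \<rho>_pos \<Lambda>_bounds] by (simp add: abs_mult abs_\<sigma>)
  then show "t \<le> 0 \<Longrightarrow> G 0 t \<le> 0" and "0 \<le> t \<Longrightarrow> 0 \<le> G 0 t"
    by (auto simp: G_0 abs_if split: if_splits)
qed

lemma abs_G_r_le: "\<bar>G r t\<bar> \<le> 6 * \<Lambda> + pi^r"
proof -
  obtain k where r: "r = k + 3"
    using three_le_r le_Suc_ex by (metis add.commute)
  have "(pderiv ^^ 3) cubic = [:6 * \<Lambda>:]"
    by (simp add: cubic_def numeral_3_eq_3 pderiv_pCons)
  then have "(pderiv ^^ r) cubic = (pderiv ^^ k) [:6 * \<Lambda>:]"
    by (simp add: r funpow_add)
  also have "\<dots> = (if k = 0 then [:6 * \<Lambda>:] else 0)"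
    by (cases k) (simp_all add: funpow_Suc_right del: funpow.simps)
  finally have "\<bar>poly ((pderiv ^^ r) cubic) t\<bar> \<le> 6 * \<Lambda>"
    using \<Lambda>_nonneg by auto
  moreover have "\<bar>\<sigma> * pi^r * sin (pi * t + real r * pi / 2)\<bar> \<le> pi^r"
    by (simp add: abs_mult abs_\<sigma>)
  ultimately show ?thesis
    unfolding G_def by linarith
qed

lemma poly_taylor: "poly taylor t = poly cubic t + \<sigma> * (\<Sum>i<Suc r. sin_coeff i * (pi * t)^i)"
  by (simp add: taylor_def poly_sum poly_monom lessThan_Suc_atMost power_mult_distrib mult_ac)

lemma degree_taylor: "degree taylor \<le> r"
proof -
  have "degree cubic \<le> r"
    using three_le_r by (simp add: cubic_def)
  moreover have "degree (\<Sum>i\<le>r. monom (pi^i * sin_coeff i) i) \<le> r"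
    by (rule degree_sum_le) (auto intro: order.trans[OF degree_monom_le])
  ultimately show ?thesis
    unfolding taylor_def by (meson degree_add_le degree_smult_le order.trans)
qed

lemma fact_mult_coeff_taylor: "i \<le> r \<Longrightarrow> fact i * coeff taylor i = G i 0"
  by (simp add: taylor_def G_def coeff_sum poly_higher_pderiv_at_0 flip: fact_mult_sin_coeff)
    (simp add: algebra_simps)

lemma abs_G_0_minus_taylor_le: "\<bar>G 0 t - poly taylor t\<bar> \<le> 2 * pi^r * \<bar>t\<bar>^r"
proof -
  have "\<bar>G 0 t - poly taylor t\<bar> = \<bar>sin (pi * t) - (\<Sum>i<Suc r. sin_coeff i * (pi * t)^i)\<bar>"
    by (simp add: G_def poly_taylor abs_\<sigma> abs_mult flip: right_diff_distrib)
  also have "\<dots> \<le> 2 * \<bar>pi * t\<bar>^r / fact r"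
    by (rule abs_sin_minus_maclaurin_le)
  also have "\<dots> \<le> 2 * \<bar>pi * t\<bar>^r"
    by (simp add: divide_le_eq fact_ge_1 mult_le_cancel_left1)
  finally show ?thesis
    by (simp add: abs_mult power_mult_distrib)
qed

lemma poly_taylor_at_neg_1: "poly taylor (-1) = \<rho> / 2"
proof -
  have "sin_coeff i * (-pi)^i = - (sin_coeff i * pi^i)" for i
    by (cases "even i") (simp_all add: sin_coeff_def)
  then have "\<sigma> * (\<Sum>i<Suc r. sin_coeff i * (pi * -1)^i) = \<rho>"
    using \<sigma>_mult_maclaurin by (simp add: sum_negf del: sum.lessThan_Suc)
  then show ?thesis
    by (simp add: poly_taylor poly_cubic)
qed

lemma has_real_derivative_F:
  assumes "0 < s"
  shows "(F s i has_real_derivative F s (Suc i) x) (at x)"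
proof -
  have "((\<lambda>x. G i (x / s) / s^i) has_real_derivative G (Suc i) (x / s) / s^Suc i) (at x)"
    using assms by (intro has_real_derivative_rescaled has_real_derivative_G) simp
  then show ?thesis
    by (simp add: F_def[abs_def])
qed

lemma Cr_on_interval_F: "0 < s \<Longrightarrow> Cr_on_interval r (F s 0) (F s)"
  by (rule Cr_on_intervalI) (rule has_real_derivative_F)

lemma continuous_on_F:
  assumes "0 < s"
  shows "continuous_on S (F s i)"
  by (simp add: continuous_at_imp_continuous_on DERIV_isCont[OF has_real_derivative_F[OF assms]])

lemma F_0_nonpos: "0 < s \<Longrightarrow> x \<le> 0 \<Longrightarrow> F s 0 x \<le> 0"
  and F_0_nonneg: "0 < s \<Longrightarrow> 0 \<le> x \<Longrightarrow> 0 \<le> F s 0 x"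
  by (simp_all add: F_def G_0_nonpos G_0_nonneg divide_nonpos_pos)

lemma supnorm_F_r_le:
  assumes "0 < s"
  shows "supnorm (F s r) \<le> (6 * \<Lambda> + pi^r) / s^r"
proof (rule supnorm_le)
  fix x :: real
  show "\<bar>F s r x\<bar> \<le> (6 * \<Lambda> + pi^r) / s^r"
    using abs_G_r_le[of "x / s"] assms by (simp add: F_def divide_right_mono)
qed

definition scaled_taylor :: "real \<Rightarrow> real poly" where
  "scaled_taylor s = pcompose taylor [:0, 1 / s:]"

lemma poly_scaled_taylor: "poly (scaled_taylor s) x = poly taylor (x / s)"
  by (simp add: scaled_taylor_def poly_pcompose)

lemma degree_scaled_taylor: "degree (scaled_taylor s) \<le> r"
  using degree_taylor by (simp add: scaled_taylor_def degree_pcompose)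

lemma fact_mult_coeff_scaled_taylor: "i \<le> r \<Longrightarrow> fact i * coeff (scaled_taylor s) i = F s i 0"
  using fact_mult_coeff_taylor[of i]
  by (simp add: scaled_taylor_def coeff_pcompose_linear F_def power_one_over field_simps)

lemma poly_scaled_taylor_at_neg: "0 < s \<Longrightarrow> poly (scaled_taylor s) (-s) = \<rho> / 2"
  by (simp add: poly_scaled_taylor poly_taylor_at_neg_1)

lemma abs_F_0_minus_scaled_taylor_le:
  assumes "0 < s" and "x \<in> {-1..1}"
  shows "\<bar>F s 0 x - poly (scaled_taylor s) x\<bar> \<le> 2 * pi^r / s^r"
proof -
  have "\<bar>F s 0 x - poly (scaled_taylor s) x\<bar> \<le> 2 * pi^r * \<bar>x / s\<bar>^r"
    using abs_G_0_minus_taylor_le[of "x / s"] by (simp add: F_def poly_scaled_taylor)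
  also have "\<dots> \<le> 2 * pi^r * (1 / s)^r"
    using assms by (intro mult_left_mono power_mono) (auto simp: divide_right_mono)
  finally show ?thesis
    by (simp add: power_one_over)
qed

lemma abs_poly_minus_scaled_taylor_le:
  assumes "0 < s" and "x \<in> {-1..1}"
  shows "\<bar>poly P x - poly (scaled_taylor s) x\<bar> \<le> supnorm (\<lambda>x. F s 0 x - poly P x) + 2 * pi^r / s^r"
proof -
  have "continuous_on {-1..1} (\<lambda>x. F s 0 x - poly P x)"
    using continuous_on_F[OF assms(1)] by (intro continuous_intros)
  then have "\<bar>F s 0 x - poly P x\<bar> \<le> supnorm (\<lambda>x. F s 0 x - poly P x)"
    using assms(2) by (rule abs_le_supnorm)
  then show ?thesis
    using abs_F_0_minus_scaled_taylor_le[OF assms] by arith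
qed

lemma supnorm_gt_if_jets_agree:
  fixes P :: "real poly"
  assumes "r \<le> n" and "0 < s" and "s \<le> 1 / (2 * (real n + 1))" and "0 \<le> A"
    and small: "2^Suc n * (2 * (real n + 1))^Suc r * (A * (6 * \<Lambda> + pi^r) + 2 * pi^r) * s < \<rho> / 2"
    and "degree P \<le> n" and nonpos: "\<forall>x\<in>{-1 / real n<..<0}. poly P x \<le> 0"
    and jets: "\<forall>i\<le>r. poly ((pderiv ^^ i) P) 0 = F s i 0"
  shows "A * supnorm (F s r) < supnorm (\<lambda>x. F s 0 x - poly P x)"
proof (rule ccontr)
  define R where "R = P - scaled_taylor s"
  assume "\<not> ?thesis"
  then have close: "supnorm (\<lambda>x. F s 0 x - poly P x) \<le> A * ((6 * \<Lambda> + pi^r) / s^r)"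
    using supnorm_F_r_le[OF \<open>0 < s\<close>] \<open>0 \<le> A\<close> by (meson mult_left_mono not_less order.trans)
  have "\<bar>poly R x\<bar> \<le> (A * (6 * \<Lambda> + pi^r) + 2 * pi^r) / s^r" if "x \<in> {-1..1}" for x
  proof -
    have "\<bar>poly R x\<bar> \<le> A * ((6 * \<Lambda> + pi^r) / s^r) + 2 * pi^r / s^r"
      using abs_poly_minus_scaled_taylor_le[OF \<open>0 < s\<close> that, of P] close by (simp add: R_def)
    then show ?thesis
      by (simp add: add_divide_distrib algebra_simps)
  qed
  moreover have "coeff R i = 0" if "i \<le> r" for i
    using jets[rule_format, OF that] fact_mult_coeff_scaled_taylor[OF that, of s]
    by (simp add: R_def poly_higher_pderiv_at_0) (metis fact_nonzero mult_cancel_left)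
  moreover have "degree R \<le> n"
    using \<open>degree P \<le> n\<close> degree_scaled_taylor[of s] \<open>r \<le> n\<close> unfolding R_def
    by (meson degree_diff_le order.trans)
  ultimately have "\<bar>poly R (-s)\<bar> \<le> 2^Suc n * (2 * (real n + 1))^Suc r
      * ((A * (6 * \<Lambda> + pi^r) + 2 * pi^r) / s^r) * s^Suc r"
    using \<open>0 < s\<close> \<open>s \<le> 1 / (2 * (real n + 1))\<close> by (intro abs_poly_le_if_flat_at_0) auto
  also have "\<dots> = 2^Suc n * (2 * (real n + 1))^Suc r * (A * (6 * \<Lambda> + pi^r) + 2 * pi^r) * s"
    using \<open>0 < s\<close> by (simp add: field_simps)
  also have "\<dots> < \<rho> / 2"
    by (fact small)
  finally have "\<bar>poly P (-s) - \<rho> / 2\<bar> < \<rho> / 2"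
    using poly_scaled_taylor_at_neg[OF \<open>0 < s\<close>] by (simp add: R_def)
  moreover have "poly P (-s) \<le> 0"
  proof -
    have "1 / (2 * (real n + 1)) < 1 / real n"
      using \<open>r \<le> n\<close> three_le_r by (simp add: field_simps)
    then show ?thesis
      using nonpos \<open>0 < s\<close> \<open>s \<le> 1 / (2 * (real n + 1))\<close> by auto
  qed
  ultimately show False
    by linarith
qed

end

theorem lemma3p13:
  fixes r n :: nat and A :: real
  assumes "odd r" and "r \<ge> 3" and "n \<ge> r" and "A > 0"
  shows "\<exists>f D. Cr_on_interval r f D \<and>
           (\<forall>x\<in>{-1..0}. f x \<le> 0) \<and> (\<forall>x\<in>{0..1}. f x \<ge> 0) \<and>
           (\<forall>P :: real poly. degree P \<le> n \<longrightarrow>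
              (\<forall>x\<in>{-1 / real n<..<0}. poly P x \<le> 0) \<longrightarrow>
              (\<forall>i\<le>r. poly ((pderiv ^^ i) P) 0 = D i 0) \<longrightarrow>
              supnorm (\<lambda>x. f x - poly P x) > A * supnorm (D r))"
proof -
  interpret sign_jet_witness r
    using assms by unfold_locales
  define K where "K = 2^Suc n * (2 * (real n + 1))^Suc r"
  define C where "C = A * (6 * \<Lambda> + pi^r) + 2 * pi^r"
  define s where "s = min (1 / (2 * (real n + 1))) (\<rho> / (4 * K * C))"
  have "0 < K" "0 < C"
    using \<open>A > 0\<close> \<Lambda>_nonneg by (simp_all add: K_def C_def add_nonneg_pos)
  then have "0 < s" and "s \<le> 1 / (2 * (real n + 1))"
    using \<rho>_pos by (simp_all add: s_def)
  have "K * C * s \<le> K * C * (\<rho> / (4 * K * C))"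
    using \<open>0 < K\<close> \<open>0 < C\<close> by (intro mult_left_mono) (simp_all add: s_def)
  also have "\<dots> < \<rho> / 2"
    using \<open>0 < K\<close> \<open>0 < C\<close> \<rho>_pos by simp
  finally have "K * C * s < \<rho> / 2" .
  with \<open>0 < s\<close> \<open>s \<le> 1 / (2 * (real n + 1))\<close> show ?thesis
    using Cr_on_interval_F F_0_nonpos F_0_nonneg assms supnorm_gt_if_jets_agree[of n s A]
    unfolding K_def C_def by (intro exI[of _ "F s 0"] exI[of _ "F s"]) auto
qed

end
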